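(* Let $d\ge2$, $b:=2^d$, $N\in\mathbb{N}$, $L:=\min\{\ell\ge0:b^\ell\ge N\}$, and assume $L\ge3$. For each $\ell\in\{0,1,\dots,L-2\}$ there exists a family $\{R_u\}_{u\in\{0,\dots,b-1\}^\ell}$ of half-open rectangles in $Q=[0,1)^d$ such that: (i) $\{R_u:|u|=\ell\}$ partitions $Q$ up to $\lambda_d$-null sets; (ii) $\lambda_d(R_u)=M(u)/N$ for every $|u|=\ell$; (iii) writing $C_u=\prod_{j=1}^d[A_{u,j},A_{u,j}+2^{-\ell})$ and $R_u=\prod_{j=1}^d[a_{u,j},b_{u,j})$, one has $|a_{u,j}-A_{u,j}|\le S_\ell$ and $|b_{u,j}-(A_{u,j}+2^{-\ell})|\le S_\ell$ for all $1\le j\le d$.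
   Context: $\lambda_d$ is Lebesgue measure. For $0\le\ell\le L-3$: $\Delta_\ell:=\frac{2^{2d-3}}{N}2^{\ell(d-1)}$, $S_0:=0$, $S_{\ell+1}:=S_\ell+\Delta_\ell$. $M(u):=\#\{1\le n\le N:x_n\in C_u\}$, where: for $a\in\{0,\dots,b-1\}$, $a=\sum_{j=1}^d\varepsilon_j(a)2^{j-1}$ with $\varepsilon_j(a)\in\{0,1\}$; for $m\ge0$, $m=\sum_{k\ge0}a_k(m)b^k$ in base $b$; $x_n:=\bigl(\sum_{k\ge0}\varepsilon_1(a_k(n-1))2^{-(k+1)},\dots,\sum_{k\ge0}\varepsilon_d(a_k(n-1))2^{-(k+1)}\bigr)$; and for a word $u=(u_0,\dots,u_{\ell-1})$, $C_u:=\prod_{j=1}^d\bigl[\sum_{k=0}^{\ell-1}\varepsilon_j(u_k)2^{-(k+1)},\sum_{k=0}^{\ell-1}\varepsilon_j(u_k)2^{-(k+1)}+2^{-\ell}\bigr)$, with $C_\varnothing=Q$ for the empty word. *)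

theory Defs
  imports "HOL-Analysis.Analysis"
begin

text \<open>Coordinates are indexed by j in {1..d}; points of R^d are extensional
functions nat => real with support {1..d}.\<close>

definition lebd :: "nat \<Rightarrow> (nat \<Rightarrow> real) measure" where
  "lebd d = PiM {1..d} (\<lambda>_. lborel)"

definition hbox :: "nat \<Rightarrow> (nat \<Rightarrow> real) \<Rightarrow> (nat \<Rightarrow> real) \<Rightarrow> (nat \<Rightarrow> real) set" where
  "hbox d lo hi = PiE {1..d} (\<lambda>j. {lo j ..< hi j})"

definition unitQ :: "nat \<Rightarrow> (nat \<Rightarrow> real) set" where
  "unitQ d = PiE {1..d} (\<lambda>_. {0 ..< 1})"

definition eps :: "nat \<Rightarrow> nat \<Rightarrow> nat" where
  "eps j a = (a div 2 ^ (j - 1)) mod 2"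

definition digit :: "nat \<Rightarrow> nat \<Rightarrow> nat \<Rightarrow> nat" where
  "digit b k m = (m div b ^ k) mod b"

text \<open>The point x_n (base b = 2^d). The series is finite: digits a_k(n-1) vanish for k >= n.\<close>
definition xpt :: "nat \<Rightarrow> nat \<Rightarrow> (nat \<Rightarrow> real)" where
  "xpt d n = restrict (\<lambda>j. \<Sum>k<n. real (eps j (digit (2 ^ d) k (n - 1))) / 2 ^ (k + 1)) {1..d}"

definition corner :: "nat list \<Rightarrow> nat \<Rightarrow> real" where
  "corner u j = (\<Sum>k<length u. real (eps j (u ! k)) / 2 ^ (k + 1))"

definition cube :: "nat \<Rightarrow> nat list \<Rightarrow> (nat \<Rightarrow> real) set" where
  "cube d u = hbox d (corner u) (\<lambda>j. corner u j + 1 / 2 ^ length u)"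

definition Mcount :: "nat \<Rightarrow> nat \<Rightarrow> nat list \<Rightarrow> nat" where
  "Mcount d N u = card {n \<in> {1..N}. xpt d n \<in> cube d u}"

definition words :: "nat \<Rightarrow> nat \<Rightarrow> nat list set" where
  "words d l = {u. length u = l \<and> set u \<subseteq> {..<2 ^ d}}"

definition Lmin :: "nat \<Rightarrow> nat \<Rightarrow> nat" where
  "Lmin d N = (LEAST l. (2 ^ d :: nat) ^ l \<ge> N)"

definition Delta :: "nat \<Rightarrow> nat \<Rightarrow> nat \<Rightarrow> real" where
  "Delta d N l = 2 ^ (2 * d - 3) / real N * 2 ^ (l * (d - 1))"

definition Ssum :: "nat \<Rightarrow> nat \<Rightarrow> nat \<Rightarrow> real" where
  "Ssum d N l = (\<Sum>i<l. Delta d N i)"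

end

theory Submission
  imports Defs
begin

(* The rectangles form a tree indexed by words.  Counting the points x_n in the dyadic cubes gives
   M(u a) = q + [a < r] for the children of a word u of length l, where q = N div b^(l+1) and
   M(u) = b q + r with r <= b.  The rectangle R_u is cut into its b children by one cut per
   coordinate, each cut dividing the current block of children in proportion to their point
   counts; the ratios telescope, so lambda_d(R_(u a)) / lambda_d(R_u) = M(u a) / M(u), and every
   point of R_u lies in exactly one child, so the rectangles partition Q exactly.  Each ratio
   differs from 1/2 by at most 1/(4q), so a cut is displaced from the midpoint of the current
   side by at most its length over 4q, which is at most Delta_l; summing over the levels gives
   the bound S_l. *)

lemma measure_lebd_hbox:
  assumes "\<And>j. j \<in> {1..d} \<Longrightarrow> lo j \<le> hi j"
  shows "measure (lebd d) (hbox d lo hi) = (\<Prod>j\<in>{1..d}. hi j - lo j)"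
proof -
  interpret product_sigma_finite "\<lambda>_::nat. lborel::real measure" by standard
  have "emeasure (lebd d) (hbox d lo hi) = (\<Prod>j\<in>{1..d}. emeasure lborel {lo j..<hi j})"
    unfolding lebd_def hbox_def by (rule emeasure_PiM) auto
  also have "\<dots> = (\<Prod>j\<in>{1..d}. ennreal (hi j - lo j))"
    using assms by (intro prod.cong) auto
  also have "\<dots> = ennreal (\<Prod>j\<in>{1..d}. hi j - lo j)"
    using assms by (subst prod_ennreal) auto
  finally have "emeasure (lebd d) (hbox d lo hi) = ennreal (\<Prod>j\<in>{1..d}. hi j - lo j)" .
  moreover have "0 \<le> (\<Prod>j\<in>{1..d}. hi j - lo j)"
    using assms by (intro prod_nonneg) auto
  ultimately show ?thesis
    by (simp add: measure_def)
qed

fun word_val :: "nat \<Rightarrow> nat list \<Rightarrow> nat" where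
  "word_val B [] = 0"
| "word_val B (a # u) = a + B * word_val B u"

lemma word_val_snoc: "word_val B (u @ [a]) = word_val B u + B ^ length u * a"
  by (induction u) (auto simp: algebra_simps)

lemma word_val_less: "set u \<subseteq> {..<B} \<Longrightarrow> word_val B u < B ^ length u"
proof (induction u)
  case (Cons a u)
  then have "a + B * word_val B u < B * (word_val B u + 1)" by auto
  also have "\<dots> \<le> B * B ^ length u"
    using Cons by (intro mult_le_mono2) auto
  finally show ?case by simp
qed simp

lemma digit_0: "digit B 0 m = m mod B"
  by (simp add: digit_def)

lemma digit_Suc: "digit B (Suc k) m = digit B k (m div B)"
  by (simp add: digit_def div_mult2_eq)

lemma digit_less: "0 < B \<Longrightarrow> digit B k m < B"
  by (simp add: digit_def)

lemma digit_eq_0: "m < B ^ k \<Longrightarrow> digit B k m = 0"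
  by (simp add: digit_def)

lemma add_mult_eq_add_mult_iff:
  fixes B x x' y y' :: nat
  assumes "y < B" "y' < B"
  shows "y + B * x = y' + B * x' \<longleftrightarrow> y = y' \<and> x = x'"
proof
  assume eq: "y + B * x = y' + B * x'"
  have "(y + B * x) mod B = y" "(y + B * x) div B = x"
    "(y' + B * x') mod B = y'" "(y' + B * x') div B = x'" using assms by auto
  then show "y = y' \<and> x = x'" using eq by metis
qed auto

lemma digits_eq_word_iff:
  "set u \<subseteq> {..<B} \<Longrightarrow>
     (\<forall>k<length u. digit B k m = u ! k) \<longleftrightarrow> m mod B ^ length u = word_val B u"
proof (induction u arbitrary: m)
  case (Cons a u)
  have "(\<forall>k<length (a # u). digit B k m = (a # u) ! k) \<longleftrightarrow>
      m mod B = a \<and> (\<forall>k<length u. digit B k (m div B) = u ! k)"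
    by (auto simp: digit_0 digit_Suc less_Suc_eq_0_disj)
  moreover have "m mod B ^ length (a # u) = m mod B + B * (m div B mod B ^ length u)"
    by (simp add: mod_mult2_eq)
  moreover have "a < B" using Cons.prems by simp
  ultimately show ?case
    using Cons add_mult_eq_add_mult_iff[of "m mod B" B a] by auto
qed simp

lemma card_less_mod_eq:
  assumes "v < B"
  shows "card {m. m < N \<and> m mod B = v} = N div B + (if v < N mod B then 1 else 0)"
proof (induction N)
  case (Suc N)
  have "{m. m < Suc N \<and> m mod B = v} = {m. m < N \<and> m mod B = v} \<union> (if N mod B = v then {N} else {})"
    by (auto simp: less_Suc_eq)
  then have card_Suc: "card {m. m < Suc N \<and> m mod B = v} =
      card {m. m < N \<and> m mod B = v} + (if N mod B = v then 1 else 0)"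
    by auto
  show ?case
  proof (cases "Suc (N mod B) = B")
    case True
    then have "Suc N mod B = 0" "Suc N div B = Suc (N div B)" by (simp_all add: mod_Suc div_Suc)
    then show ?thesis using card_Suc Suc.IH True assms by auto
  next
    case False
    then have "Suc N mod B = Suc (N mod B)" "Suc N div B = N div B" by (simp_all add: mod_Suc div_Suc)
    then show ?thesis using card_Suc Suc.IH False assms by (auto simp: less_Suc_eq)
  qed
qed simp

lemma eps_0_or_1: "eps j a = 0 \<or> eps j a = 1"
  by (auto simp: eps_def)

lemma eps_le_1: "eps j a \<le> 1"
  by (simp add: eps_def)

lemma div_pow2_eq_eps: "a div 2 ^ i = 2 * (a div 2 ^ Suc i) + eps (Suc i) a"
proof -
  have "a div 2 ^ Suc i = a div 2 ^ i div 2" by (metis div_mult2_eq power_Suc2)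
  then show ?thesis by (simp add: eps_def)
qed

lemma eps_inject:
  "a < 2 ^ d \<Longrightarrow> a' < 2 ^ d \<Longrightarrow> (\<forall>j\<in>{1..d}. eps j a = eps j a') \<Longrightarrow> a = a'"
proof (induction d arbitrary: a a')
  case (Suc d)
  have eps_Suc: "eps (Suc j) x = eps j (x div 2)" if "1 \<le> j" for j x
    using that by (cases j) (simp_all add: eps_def div_mult2_eq)
  have "eps 1 a = eps 1 a'"
    using Suc.prems(3) by auto
  then have "a mod 2 = a' mod 2"
    by (simp add: eps_def)
  moreover have "a div 2 = a' div 2"
    using Suc.prems by (intro Suc.IH) (auto simp: eps_Suc[symmetric])
  ultimately show ?case by (metis div_mult_mod_eq)
qed simp

lemma binary_sum_nonneg: "0 \<le> (\<Sum>k<K. real (\<beta> k) / 2 ^ (k + 1))"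
  by (intro sum_nonneg) auto

lemma binary_sum_le:
  assumes "\<And>k. \<beta> k \<le> 1"
  shows "(\<Sum>k<K. real (\<beta> k) / 2 ^ (k + 1)) \<le> 1 - 1 / 2 ^ K"
proof -
  have "(\<Sum>k<K. real (\<beta> k) / 2 ^ (k + 1)) \<le> (\<Sum>k<K. 1 / 2 ^ (k + 1))"
    using assms by (intro sum_mono divide_right_mono) auto
  also have "\<dots> = 1 - 1 / 2 ^ K"
    by (induction K) (auto simp: field_simps)
  finally show ?thesis .
qed

lemma binary_sum_less_1:
  assumes "\<And>k. \<beta> k \<le> 1"
  shows "(\<Sum>k<K. real (\<beta> k) / 2 ^ (k + 1)) < 1"
proof -
  have "0 < (1::real) / 2 ^ K" by simp
  then show ?thesis using binary_sum_le[of \<beta> K, OF assms] by linarith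
qed

lemma halves_in_interval_iff:
  fixes x c t :: real and e e' :: nat
  assumes "e \<le> 1" "e' \<le> 1" "0 \<le> x" "x < 1" "0 \<le> c" "c + t \<le> 1" "0 < t"
  shows "(e' / 2 + c / 2 \<le> e / 2 + x / 2 \<and> e / 2 + x / 2 < e' / 2 + c / 2 + t / 2) \<longleftrightarrow>
     e = e' \<and> c \<le> x \<and> x < c + t"
proof -
  have "e = 0 \<or> e = 1" "e' = 0 \<or> e' = 1" using assms(1,2) by auto
  then show ?thesis using assms(3-) by auto
qed

lemma binary_sum_in_dyadic_iff:
  assumes "\<And>k. \<beta> k \<le> 1" "\<And>k. \<gamma> k \<le> 1" "l \<le> K"
  shows "((\<Sum>k<l. real (\<gamma> k) / 2 ^ (k + 1)) \<le> (\<Sum>k<K. real (\<beta> k) / 2 ^ (k + 1)) \<and>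
          (\<Sum>k<K. real (\<beta> k) / 2 ^ (k + 1)) < (\<Sum>k<l. real (\<gamma> k) / 2 ^ (k + 1)) + 1 / 2 ^ l)
         \<longleftrightarrow> (\<forall>k<l. \<beta> k = \<gamma> k)"
  using assms
proof (induction l arbitrary: \<beta> \<gamma> K)
  case 0
  then show ?case using binary_sum_less_1[of \<beta> K] binary_sum_nonneg[of \<beta> K] by simp
next
  case (Suc l)
  obtain K' where K: "K = Suc K'" using Suc.prems(3) by (cases K) auto
  define x where "x = (\<Sum>k<K'. real (\<beta> (Suc k)) / 2 ^ (k + 1))"
  define c where "c = (\<Sum>k<l. real (\<gamma> (Suc k)) / 2 ^ (k + 1))"
  have shift: "(\<Sum>k<Suc n. real (\<delta> k) / 2 ^ (k + 1)) =
      real (\<delta> 0) / 2 + (\<Sum>k<n. real (\<delta> (Suc k)) / 2 ^ (k + 1)) / 2" for \<delta> :: "nat \<Rightarrow> nat" and n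
    unfolding sum.lessThan_Suc_shift by (simp add: sum_divide_distrib)
  have IH: "(c \<le> x \<and> x < c + 1 / 2 ^ l) \<longleftrightarrow> (\<forall>k<l. \<beta> (Suc k) = \<gamma> (Suc k))"
    unfolding x_def c_def using Suc.prems K by (intro Suc.IH) auto
  have "x < 1"
    unfolding x_def using Suc.prems(1) by (rule binary_sum_less_1)
  moreover have "c + 1 / 2 ^ l \<le> 1"
    using binary_sum_le[of "\<lambda>k. \<gamma> (Suc k)" l] Suc.prems(2) unfolding c_def by simp
  moreover have "0 \<le> x" "0 \<le> c"
    unfolding x_def c_def by (rule binary_sum_nonneg)+
  moreover have "(\<forall>k<Suc l. \<beta> k = \<gamma> k) \<longleftrightarrow> \<beta> 0 = \<gamma> 0 \<and> (\<forall>k<l. \<beta> (Suc k) = \<gamma> (Suc k))"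
    by (auto simp: less_Suc_eq_0_disj)
  ultimately show ?case
    unfolding K shift x_def[symmetric] c_def[symmetric]
    using halves_in_interval_iff[of "\<beta> 0" "\<gamma> 0" x c "1 / 2 ^ l"] IH Suc.prems
    by (simp add: mult.commute)
qed

lemma xpt_Suc_in_cube_iff:
  assumes d: "1 \<le> d" and u: "u \<in> words d l"
  shows "xpt d (Suc m) \<in> cube d u \<longleftrightarrow> m mod (2 ^ d) ^ l = word_val (2 ^ d) u"
proof -
  let ?b = "(2::nat) ^ d"
  let ?bit = "\<lambda>j k. eps j (digit ?b k m)"
  have lu: "length u = l" and su: "set u \<subseteq> {..<?b}" using u by (auto simp: words_def)
  define K where "K = max (Suc m) l"
  have large: "m < ?b ^ k" if "Suc m \<le> k" for k
  proof -
    have "m < 2 ^ k" using that by (intro less_le_trans[OF less_exp[of m]] power_increasing) auto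
    also have "(2::nat) ^ k \<le> ?b ^ k" using d by (intro power_mono) (auto simp: self_le_power)
    finally show ?thesis .
  qed
  have xpt: "xpt d (Suc m) j = (\<Sum>k<K. real (?bit j k) / 2 ^ (k + 1))" if "j \<in> {1..d}" for j
    unfolding xpt_def restrict_apply'[OF that] diff_Suc_1
    by (rule sum.mono_neutral_left) (auto simp: K_def digit_eq_0 eps_def large)
  have dyadic: "(corner u j \<le> xpt d (Suc m) j \<and> xpt d (Suc m) j < corner u j + 1 / 2 ^ l)
      \<longleftrightarrow> (\<forall>k<l. ?bit j k = eps j (u ! k))" if "j \<in> {1..d}" for j
    unfolding corner_def lu xpt[OF that]
    by (rule binary_sum_in_dyadic_iff) (auto simp: eps_le_1[unfolded One_nat_def] K_def)
  have "xpt d (Suc m) \<in> cube d u \<longleftrightarrow>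
      (\<forall>j\<in>{1..d}. corner u j \<le> xpt d (Suc m) j \<and> xpt d (Suc m) j < corner u j + 1 / 2 ^ l)"
    unfolding cube_def hbox_def lu by (auto simp: PiE_iff xpt_def)
  also have "\<dots> \<longleftrightarrow> (\<forall>j\<in>{1..d}. \<forall>k<l. ?bit j k = eps j (u ! k))"
    using dyadic by auto
  also have "\<dots> \<longleftrightarrow> (\<forall>k<l. digit ?b k m = u ! k)"
  proof
    assume bits: "\<forall>j\<in>{1..d}. \<forall>k<l. ?bit j k = eps j (u ! k)"
    show "\<forall>k<l. digit ?b k m = u ! k"
    proof (intro allI impI)
      fix k assume "k < l"
      then have "u ! k < ?b" using su lu nth_mem by fastforce
      then show "digit ?b k m = u ! k"
        using bits \<open>k < l\<close> by (intro eps_inject[of _ d]) (auto simp: digit_less)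
    qed
  qed auto
  also have "\<dots> \<longleftrightarrow> m mod ?b ^ l = word_val ?b u"
    using digits_eq_word_iff[OF su, of m] lu by simp
  finally show ?thesis .
qed

lemma Mcount_eq:
  assumes "1 \<le> d" and u: "u \<in> words d l"
  shows "Mcount d N u =
    N div (2 ^ d) ^ l + (if word_val (2 ^ d) u < N mod (2 ^ d) ^ l then 1 else 0)"
proof -
  let ?b = "(2::nat) ^ d"
  have "{n \<in> {1..N}. xpt d n \<in> cube d u} = Suc ` {m. m < N \<and> m mod ?b ^ l = word_val ?b u}"
    using xpt_Suc_in_cube_iff[OF assms] by (auto simp: image_iff Suc_le_eq gr0_conv_Suc)
  then have "Mcount d N u = card {m. m < N \<and> m mod ?b ^ l = word_val ?b u}"
    unfolding Mcount_def by (simp add: card_image)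
  also have "\<dots> = N div ?b ^ l + (if word_val ?b u < N mod ?b ^ l then 1 else 0)"
    using word_val_less[of u ?b] u by (intro card_less_mod_eq) (auto simp: words_def)
  finally show ?thesis .
qed

definition Mquot :: "nat \<Rightarrow> nat \<Rightarrow> nat \<Rightarrow> nat" where
  "Mquot d N l = N div (2 ^ d) ^ Suc l"

definition Mrem :: "nat \<Rightarrow> nat \<Rightarrow> nat list \<Rightarrow> nat" where
  "Mrem d N u = N div (2 ^ d) ^ length u mod 2 ^ d
     + (if word_val (2 ^ d) u < N mod (2 ^ d) ^ length u then 1 else 0)"

lemma Mrem_le: "Mrem d N u \<le> 2 ^ d"
proof -
  have "N div (2 ^ d) ^ length u mod 2 ^ d < (2::nat) ^ d" by simp
  then show ?thesis unfolding Mrem_def by (auto simp: Suc_le_eq)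
qed

lemma Mcount_eq_Mquot_Mrem:
  assumes "1 \<le> d" "u \<in> words d l"
  shows "Mcount d N u = 2 ^ d * Mquot d N l + Mrem d N u"
proof -
  have "N div (2 ^ d) ^ Suc l = N div (2 ^ d) ^ l div 2 ^ d"
    by (simp only: power_Suc2 div_mult2_eq)
  then have "N div (2 ^ d) ^ l = 2 ^ d * Mquot d N l + N div (2 ^ d) ^ l mod 2 ^ d"
    unfolding Mquot_def by (metis div_mult_mod_eq mult.commute)
  then show ?thesis
    using assms by (simp add: Mcount_eq Mquot_def Mrem_def words_def)
qed

lemma add_mult_less_mult_add_iff:
  fixes v B s a t :: nat
  assumes "v < B" "s < B"
  shows "v + B * a < B * t + s \<longleftrightarrow> a < t + (if v < s then 1 else 0)"
proof (cases a t rule: linorder_cases)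
  case less
  then have "B * (a + 1) \<le> B * t" by (intro mult_le_mono2) simp
  then show ?thesis using less assms by auto
next
  case greater
  then have "B * (t + 1) \<le> B * a" by (intro mult_le_mono2) simp
  then show ?thesis using greater assms by auto
qed simp

lemma Mcount_snoc:
  assumes "1 \<le> d" and u: "u \<in> words d l" and a: "a < 2 ^ d"
  shows "Mcount d N (u @ [a]) = Mquot d N l + (if a < Mrem d N u then 1 else 0)"
proof -
  let ?b = "(2::nat) ^ d"
  define B where "B = ?b ^ l"
  define v where "v = word_val ?b u"
  have lu: "length u = l" using u by (simp add: words_def)
  have "v < B" using word_val_less[of u ?b] u unfolding v_def B_def by (simp add: words_def)
  have "u @ [a] \<in> words d (Suc l)" using u a by (simp add: words_def)
  then have "Mcount d N (u @ [a]) =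
      N div ?b ^ Suc l + (if word_val ?b (u @ [a]) < N mod ?b ^ Suc l then 1 else 0)"
    by (rule Mcount_eq[OF assms(1)])
  also have "?b ^ Suc l = B * ?b" unfolding B_def by (rule power_Suc2)
  also have "word_val ?b (u @ [a]) = v + B * a"
    unfolding v_def B_def using lu by (simp add: word_val_snoc)
  also have "N mod (B * ?b) = B * (N div B mod ?b) + N mod B"
    by (rule mod_mult2_eq)
  also have "v + B * a < B * (N div B mod ?b) + N mod B \<longleftrightarrow> a < Mrem d N u"
    unfolding Mrem_def lu B_def[symmetric] v_def[symmetric]
    by (rule add_mult_less_mult_add_iff) (use \<open>v < B\<close> in \<open>auto simp: B_def\<close>)
  finally show ?thesis by (simp add: Mquot_def B_def mult.commute)
qed

(* If the children with index below r receive q + 1 points and the others q, then the c-th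
   block of 2^j consecutive children receives group_count q r j c points. *)

definition group_count :: "nat \<Rightarrow> nat \<Rightarrow> nat \<Rightarrow> nat \<Rightarrow> nat" where
  "group_count q r j c = 2 ^ j * q + min (2 ^ j) (r - c * 2 ^ j)"

lemma group_count_0: "group_count q r 0 a = q + (if a < r then 1 else 0)"
  by (simp add: group_count_def)

lemma group_count_top: "r \<le> 2 ^ d \<Longrightarrow> group_count q r d 0 = 2 ^ d * q + r"
  by (simp add: group_count_def)

lemma group_count_pos: "0 < q \<Longrightarrow> 0 < group_count q r j c"
  by (simp add: group_count_def)

lemma group_count_split:
  "group_count q r i (2 * c) + group_count q r i (2 * c + 1) = group_count q r (Suc i) c"
proof -
  have "r - (2 * c + 1) * 2 ^ i = (r - 2 * c * 2 ^ i) - 2 ^ i" "r - c * 2 ^ Suc i = r - 2 * c * 2 ^ i"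
    by (simp_all add: algebra_simps)
  moreover have "min h y + min h (y - h) = min (2 * h) y" for h y :: nat by auto
  ultimately show ?thesis by (simp add: group_count_def algebra_simps)
qed

lemma group_count_le_double: "group_count q r (Suc i) c \<le> 2 * group_count q r i (2 * c)"
  by (simp add: group_count_def algebra_simps)

lemma group_count_imbalance:
  "2 * q * (2 * group_count q r i (2 * c) - group_count q r (Suc i) c) \<le> group_count q r (Suc i) c"
proof -
  define h where "h = (2::nat) ^ i"
  define y where "y = r - 2 * c * 2 ^ i"
  have big: "group_count q r (Suc i) c = 2 * h * q + min (2 * h) y"
    by (simp add: group_count_def h_def y_def algebra_simps)
  have small: "group_count q r i (2 * c) = h * q + min h y"
    by (simp add: group_count_def h_def y_def algebra_simps)
  have "2 * min h y - min (2 * h) y \<le> h" by auto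
  then have "2 * q * (2 * min h y - min (2 * h) y) \<le> 2 * q * h" by simp
  then show ?thesis unfolding big small by (simp add: algebra_simps)
qed

(* A box is cut successively in coordinates d, d - 1, ..., 1.  The cut in coordinate j splits the
   block of 2^j children sharing a div 2^j into its two halves, in proportion to their point
   counts, and bit j - 1 of a selects the half containing child a. *)

definition split_ratio :: "nat \<Rightarrow> nat \<Rightarrow> nat \<Rightarrow> nat \<Rightarrow> real" where
  "split_ratio q r j c = real (group_count q r (j - 1) (2 * c)) / real (group_count q r j c)"

definition split_point :: "nat \<Rightarrow> nat \<Rightarrow> (nat \<Rightarrow> real) \<Rightarrow> (nat \<Rightarrow> real) \<Rightarrow> nat \<Rightarrow> nat \<Rightarrow> real" where
  "split_point q r lo hi j c = lo j + split_ratio q r j c * (hi j - lo j)"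

definition child_corners ::
    "nat \<Rightarrow> nat \<Rightarrow> nat \<Rightarrow> (nat \<Rightarrow> real) \<times> (nat \<Rightarrow> real) \<Rightarrow> (nat \<Rightarrow> real) \<times> (nat \<Rightarrow> real)" where
  "child_corners q r a lh =
    ((\<lambda>j. if eps j a = 0 then fst lh j else split_point q r (fst lh) (snd lh) j (a div 2 ^ j)),
     (\<lambda>j. if eps j a = 0 then split_point q r (fst lh) (snd lh) j (a div 2 ^ j) else snd lh j))"

lemma split_ratio_bounds:
  assumes q: "0 < q" and j: "1 \<le> j"
  shows "1 / 2 \<le> split_ratio q r j c" "split_ratio q r j c \<le> 1"
    "split_ratio q r j c - 1 / 2 \<le> 1 / (4 * real q)"
proof -
  obtain i where ji: "j = Suc i" using j by (cases j) auto
  define G where "G = group_count q r (Suc i) c"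
  define G1 where "G1 = group_count q r i (2 * c)"
  have G0: "0 < G" unfolding G_def by (rule group_count_pos[OF q])
  have ratio: "split_ratio q r j c = real G1 / real G"
    unfolding split_ratio_def ji G_def G1_def by simp
  have "G \<le> 2 * G1" unfolding G_def G1_def by (rule group_count_le_double)
  moreover have "G1 \<le> G" unfolding G_def G1_def using group_count_split[of q r i c] by linarith
  moreover have "2 * q * (2 * G1 - G) \<le> G" unfolding G_def G1_def by (rule group_count_imbalance)
  then have "2 * real q * (2 * real G1 - real G) \<le> real G"
    using \<open>G \<le> 2 * G1\<close> by (metis of_nat_diff of_nat_le_iff of_nat_mult of_nat_numeral)
  ultimately show "1 / 2 \<le> split_ratio q r j c" "split_ratio q r j c \<le> 1"
    "split_ratio q r j c - 1 / 2 \<le> 1 / (4 * real q)"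
    unfolding ratio using G0 q by (simp_all add: field_simps)
qed

lemma split_point_between:
  assumes "0 < q" "1 \<le> j" "lo j \<le> hi j"
  shows "lo j \<le> split_point q r lo hi j c" "split_point q r lo hi j c \<le> hi j"
proof -
  have "0 \<le> split_ratio q r j c" "split_ratio q r j c \<le> 1"
    using split_ratio_bounds[OF assms(1,2), of r c] by auto
  then have "0 \<le> split_ratio q r j c * (hi j - lo j)" "split_ratio q r j c * (hi j - lo j) \<le> hi j - lo j"
    using assms(3) by (auto simp: mult_left_le_one_le)
  then show "lo j \<le> split_point q r lo hi j c" "split_point q r lo hi j c \<le> hi j"
    unfolding split_point_def by auto
qed

lemma prod_quotient_telescope:
  fixes G :: "nat \<Rightarrow> real"
  assumes "\<And>j. G j \<noteq> 0"
  shows "(\<Prod>j\<in>{1..n}. G (j - 1) / G j) = G 0 / G n"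
proof (induction n)
  case (Suc n)
  have "{1..Suc n} = insert (Suc n) {1..n}" by auto
  then show ?case using Suc.IH assms by simp
qed (use assms in simp)

lemma child_corners_side:
  assumes q: "0 < q" and j: "1 \<le> j"
  shows "snd (child_corners q r a (lo, hi)) j - fst (child_corners q r a (lo, hi)) j =
     (hi j - lo j) * (real (group_count q r (j - 1) (a div 2 ^ (j - 1))) / real (group_count q r j (a div 2 ^ j)))"
proof -
  obtain i where ji: "j = Suc i" using j by (cases j) auto
  define c where "c = a div 2 ^ Suc i"
  have G0: "0 < real (group_count q r (Suc i) c)" using group_count_pos[OF q] by simp
  have ds: "a div 2 ^ i = 2 * c + eps (Suc i) a" unfolding c_def by (rule div_pow2_eq_eps)
  show ?thesis
  proof (cases "eps j a = 0")
    case True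
    then show ?thesis using ds ji
      by (simp add: child_corners_def split_point_def split_ratio_def c_def algebra_simps)
  next
    case False
    then have "eps j a = 1" using eps_0_or_1[of j a] by simp
    have "real (group_count q r i (2 * c)) + real (group_count q r i (2 * c + 1)) =
        real (group_count q r (Suc i) c)"
      using group_count_split[of q r i c] by (metis of_nat_add)
    then have "1 - split_ratio q r (Suc i) c = real (group_count q r i (2 * c + 1)) / real (group_count q r (Suc i) c)"
      unfolding split_ratio_def using G0 by (simp add: field_simps)
    moreover have "snd (child_corners q r a (lo, hi)) j - fst (child_corners q r a (lo, hi)) j =
        (hi j - lo j) * (1 - split_ratio q r (Suc i) c)"
      using False ji by (simp add: child_corners_def split_point_def c_def algebra_simps)
    ultimately show ?thesis using ds \<open>eps j a = 1\<close> ji by (simp add: c_def)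
  qed
qed

lemma child_corners_volume:
  assumes "0 < q" "a < 2 ^ d"
  shows "(\<Prod>j\<in>{1..d}. snd (child_corners q r a (lo, hi)) j - fst (child_corners q r a (lo, hi)) j) =
     (\<Prod>j\<in>{1..d}. hi j - lo j) * (real (group_count q r 0 a) / real (group_count q r d 0))"
proof -
  define G where "G j = real (group_count q r j (a div 2 ^ j))" for j
  have "(\<Prod>j\<in>{1..d}. snd (child_corners q r a (lo, hi)) j - fst (child_corners q r a (lo, hi)) j) =
        (\<Prod>j\<in>{1..d}. (hi j - lo j) * (G (j - 1) / G j))"
    unfolding G_def by (intro prod.cong refl child_corners_side[OF assms(1)]) auto
  also have "\<dots> = (\<Prod>j\<in>{1..d}. hi j - lo j) * (\<Prod>j\<in>{1..d}. G (j - 1) / G j)"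
    by (rule prod.distrib)
  also have "(\<Prod>j\<in>{1..d}. G (j - 1) / G j) = G 0 / G d"
    by (rule prod_quotient_telescope) (use group_count_pos[OF assms(1)] in \<open>simp add: G_def\<close>)
  finally show ?thesis using assms(2) by (simp add: G_def)
qed

lemma child_corners_lo_le_hi:
  assumes "0 < q" "1 \<le> j" "lo j \<le> hi j"
  shows "fst (child_corners q r a (lo, hi)) j \<le> snd (child_corners q r a (lo, hi)) j"
  using split_point_between[of q j lo hi r "a div 2 ^ j", OF assms] assms(3)
  by (auto simp: child_corners_def)

lemma mem_child_corners_iff:
  assumes "0 < q" and lo_hi: "\<And>j. j \<in> {1..d} \<Longrightarrow> lo j \<le> hi j"
  shows "x \<in> hbox d (fst (child_corners q r a (lo, hi))) (snd (child_corners q r a (lo, hi))) \<longleftrightarrow>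
     x \<in> hbox d lo hi \<and> (\<forall>j\<in>{1..d}. x j < split_point q r lo hi j (a div 2 ^ j) \<longleftrightarrow> eps j a = 0)"
proof -
  have "(fst (child_corners q r a (lo, hi)) j \<le> x j \<and> x j < snd (child_corners q r a (lo, hi)) j) \<longleftrightarrow>
      (lo j \<le> x j \<and> x j < hi j) \<and> (x j < split_point q r lo hi j (a div 2 ^ j) \<longleftrightarrow> eps j a = 0)"
    if j: "j \<in> {1..d}" for j
    using split_point_between[of q j lo hi r "a div 2 ^ j", OF assms(1) _ lo_hi[OF j]] j eps_0_or_1[of j a]
    by (auto simp: child_corners_def)
  then show ?thesis unfolding hbox_def PiE_iff by auto
qed

lemma child_index_unique:
  assumes "a < 2 ^ d" "a' < 2 ^ d"
    and "\<forall>j\<in>{1..d}. x j < P j (a div 2 ^ j) \<longleftrightarrow> eps j a = 0"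
    and "\<forall>j\<in>{1..d}. x j < P j (a' div 2 ^ j) \<longleftrightarrow> eps j a' = 0"
  shows "a = a'"
proof -
  have "i \<le> d \<Longrightarrow> a div 2 ^ (d - i) = a' div 2 ^ (d - i)" for i
  proof (induction i)
    case (Suc i)
    define j where "j = d - i"
    have j: "j \<in> {1..d}" "d - Suc i = j - 1" using Suc.prems unfolding j_def by auto
    have same_block: "a div 2 ^ j = a' div 2 ^ j" using Suc unfolding j_def by simp
    then have "eps j a = eps j a'"
      using assms(3,4) j(1) eps_0_or_1[of j a] eps_0_or_1[of j a'] by metis
    moreover obtain i' where "j = Suc i'" using j by (cases j) auto
    ultimately show ?case using same_block div_pow2_eq_eps[of a i'] div_pow2_eq_eps[of a' i'] j(2) by simp
  qed (use assms(1,2) in simp)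
  from this[of d] show ?thesis by simp
qed

(* The leading i bits of the index of the child containing x, decided from coordinate d down. *)

fun child_index :: "nat \<Rightarrow> (nat \<Rightarrow> real) \<Rightarrow> (nat \<Rightarrow> nat \<Rightarrow> real) \<Rightarrow> nat \<Rightarrow> nat" where
  "child_index d x P 0 = 0"
| "child_index d x P (Suc i) =
     2 * child_index d x P i + (if x (d - i) < P (d - i) (child_index d x P i) then 0 else 1)"

lemma child_index_less: "child_index d x P i < 2 ^ i"
  by (induction i) auto

lemma child_index_div: "child_index d x P (i + k) div 2 ^ k = child_index d x P i"
proof (induction k)
  case (Suc k)
  have "child_index d x P (i + Suc k) div 2 ^ Suc k = child_index d x P (i + Suc k) div 2 div 2 ^ k"
    by (simp add: div_mult2_eq)
  then show ?case using Suc by simp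
qed simp

lemma child_index_exists:
  fixes x :: "nat \<Rightarrow> real" and P :: "nat \<Rightarrow> nat \<Rightarrow> real"
  shows "\<exists>a < 2 ^ d. \<forall>j\<in>{1..d}. x j < P j (a div 2 ^ j) \<longleftrightarrow> eps j a = 0"
proof (intro exI conjI ballI)
  let ?a = "child_index d x P d"
  show "?a < 2 ^ d" by (rule child_index_less)
  fix j assume j: "j \<in> {1..d}"
  have "(d - j) + j = d" "Suc (d - j) + (j - 1) = d" using j by auto
  then have "?a div 2 ^ j = child_index d x P (d - j)"
    and "?a div 2 ^ (j - 1) = child_index d x P (Suc (d - j))"
    using child_index_div[of d x P "d - j" j] child_index_div[of d x P "Suc (d - j)" "j - 1"]
    by simp_all
  moreover have "d - (d - j) = j" using j by simp
  ultimately have "eps j ?a = (if x j < P j (?a div 2 ^ j) then 0 else 1)"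
    by (simp add: eps_def)
  then show "x j < P j (?a div 2 ^ j) \<longleftrightarrow> eps j ?a = 0" by simp
qed

fun cell_corners_rev :: "nat \<Rightarrow> nat \<Rightarrow> nat list \<Rightarrow> (nat \<Rightarrow> real) \<times> (nat \<Rightarrow> real)" where
  "cell_corners_rev d N [] = (\<lambda>_. 0, \<lambda>_. 1)"
| "cell_corners_rev d N (a # rv) =
     child_corners (Mquot d N (length rv)) (Mrem d N (rev rv)) a (cell_corners_rev d N rv)"

definition cell_corners :: "nat \<Rightarrow> nat \<Rightarrow> nat list \<Rightarrow> (nat \<Rightarrow> real) \<times> (nat \<Rightarrow> real)" where
  "cell_corners d N u = cell_corners_rev d N (rev u)"

abbreviation cell :: "nat \<Rightarrow> nat \<Rightarrow> nat list \<Rightarrow> (nat \<Rightarrow> real) set" where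
  "cell d N u \<equiv> hbox d (fst (cell_corners d N u)) (snd (cell_corners d N u))"

lemma cell_corners_Nil: "cell_corners d N [] = (\<lambda>_. 0, \<lambda>_. 1)"
  by (simp add: cell_corners_def)

lemma cell_corners_snoc:
  "cell_corners d N (u @ [a]) = child_corners (Mquot d N (length u)) (Mrem d N u) a
     (fst (cell_corners d N u), snd (cell_corners d N u))"
  by (simp add: cell_corners_def)

lemma cell_Nil: "cell d N [] = unitQ d"
  by (simp add: cell_corners_Nil hbox_def unitQ_def)

lemma words_0: "words d 0 = {[]}"
  by (auto simp: words_def)

lemma snoc_in_words_iff: "u @ [a] \<in> words d (Suc l) \<longleftrightarrow> u \<in> words d l \<and> a < 2 ^ d"
  by (auto simp: words_def)

lemma words_SucE:
  assumes "u \<in> words d (Suc l)"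
  obtains v a where "u = v @ [a]" "v \<in> words d l" "a < 2 ^ d"
proof -
  have "u \<noteq> []" using assms by (auto simp: words_def)
  then obtain v a where "u = v @ [a]" by (metis rev_exhaust)
  with assms that show ?thesis using snoc_in_words_iff by blast
qed

lemma pow_le_of_pow_Suc_le:
  assumes "((2::nat) ^ d) ^ Suc l \<le> N"
  shows "(2 ^ d) ^ l \<le> N"
proof -
  have "((2::nat) ^ d) ^ l \<le> (2 ^ d) ^ Suc l" by (rule power_increasing) simp_all
  then show ?thesis using assms by (rule order_trans)
qed

lemma Mquot_pos: "((2::nat) ^ d) ^ Suc l \<le> N \<Longrightarrow> 0 < Mquot d N l"
  by (simp add: Mquot_def div_greater_zero_iff)

lemma Mquot_ge: "((2::nat) ^ d) ^ Suc (Suc l) \<le> N \<Longrightarrow> 2 ^ d \<le> Mquot d N l"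
  by (simp add: Mquot_def less_eq_div_iff_mult_less_eq mult.commute)

lemma cell_lo_le_hi:
  "((2::nat) ^ d) ^ l \<le> N \<Longrightarrow> u \<in> words d l \<Longrightarrow> j \<in> {1..d} \<Longrightarrow>
     fst (cell_corners d N u) j \<le> snd (cell_corners d N u) j"
proof (induction l arbitrary: u)
  case 0
  then show ?case by (simp add: words_0 cell_corners_Nil)
next
  case (Suc l)
  obtain v a where u: "u = v @ [a]" "v \<in> words d l" "a < 2 ^ d"
    using words_SucE[OF Suc.prems(2)] .
  have "length v = l" using u(2) by (simp add: words_def)
  moreover have "0 < Mquot d N l" using Suc.prems(1) by (rule Mquot_pos)
  moreover have "((2::nat) ^ d) ^ l \<le> N" using Suc.prems(1) by (rule pow_le_of_pow_Suc_le)
  ultimately show ?case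
    using Suc u child_corners_lo_le_hi[of "Mquot d N l" j "fst (cell_corners d N v)" "snd (cell_corners d N v)"]
    by (simp add: cell_corners_snoc)
qed

lemma mem_cell_snoc_iff:
  assumes N: "((2::nat) ^ d) ^ Suc l \<le> N" and v: "v \<in> words d l"
  shows "x \<in> cell d N (v @ [a]) \<longleftrightarrow> x \<in> cell d N v \<and>
     (\<forall>j\<in>{1..d}. x j < split_point (Mquot d N l) (Mrem d N v)
        (fst (cell_corners d N v)) (snd (cell_corners d N v)) j (a div 2 ^ j) \<longleftrightarrow> eps j a = 0)"
proof -
  have lv: "length v = l" using v by (simp add: words_def)
  have "fst (cell_corners d N v) j \<le> snd (cell_corners d N v) j" if "j \<in> {1..d}" for j
    using cell_lo_le_hi[OF pow_le_of_pow_Suc_le[OF N] v that] .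
  then show ?thesis
    unfolding cell_corners_snoc lv by (rule mem_child_corners_iff[OF Mquot_pos[OF N]])
qed

lemma cells_cover:
  "((2::nat) ^ d) ^ l \<le> N \<Longrightarrow> (\<Union>u\<in>words d l. cell d N u) = unitQ d"
proof (induction l)
  case 0
  then show ?case by (simp add: words_0 cell_Nil)
next
  case (Suc l)
  note IH = Suc.IH[OF pow_le_of_pow_Suc_le[OF Suc.prems]]
  note mem_child = mem_cell_snoc_iff[OF Suc.prems]
  have "cell d N u \<subseteq> unitQ d" if "u \<in> words d (Suc l)" for u
    using that IH by (elim words_SucE) (auto simp: mem_child)
  moreover have "\<exists>u\<in>words d (Suc l). x \<in> cell d N u" if x: "x \<in> unitQ d" for x
  proof -
    obtain v where v: "v \<in> words d l" "x \<in> cell d N v" using IH x by blast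
    obtain a where "a < 2 ^ d" "\<forall>j\<in>{1..d}. x j < split_point (Mquot d N l) (Mrem d N v)
        (fst (cell_corners d N v)) (snd (cell_corners d N v)) j (a div 2 ^ j) \<longleftrightarrow> eps j a = 0"
      using child_index_exists by blast
    then show ?thesis using v mem_child[OF v(1)] snoc_in_words_iff by blast
  qed
  ultimately show ?case by blast
qed

lemma cells_disjoint:
  "((2::nat) ^ d) ^ l \<le> N \<Longrightarrow> disjoint_family_on (cell d N) (words d l)"
proof (induction l)
  case 0
  then show ?case by (simp add: words_0 disjoint_family_on_def)
next
  case (Suc l)
  note IH = Suc.IH[OF pow_le_of_pow_Suc_le[OF Suc.prems]]
  note mem_child = mem_cell_snoc_iff[OF Suc.prems]
  let ?P = "\<lambda>v. split_point (Mquot d N l) (Mrem d N v) (fst (cell_corners d N v)) (snd (cell_corners d N v))"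
  show ?case unfolding disjoint_family_on_def
  proof (intro ballI impI)
    fix u u' assume u: "u \<in> words d (Suc l)" "u' \<in> words d (Suc l)" "u \<noteq> u'"
    obtain v a where v: "u = v @ [a]" "v \<in> words d l" "a < 2 ^ d" using words_SucE[OF u(1)] .
    obtain v' a' where v': "u' = v' @ [a']" "v' \<in> words d l" "a' < 2 ^ d" using words_SucE[OF u(2)] .
    show "cell d N u \<inter> cell d N u' = {}"
    proof (cases "v = v'")
      case True
      show ?thesis
      proof (rule ccontr)
        assume "cell d N u \<inter> cell d N u' \<noteq> {}"
        then obtain x where "x \<in> cell d N (v @ [a])" "x \<in> cell d N (v @ [a'])"
          using v(1) v'(1) True by blast
        then have "\<forall>j\<in>{1..d}. x j < ?P v j (a div 2 ^ j) \<longleftrightarrow> eps j a = 0"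
          and "\<forall>j\<in>{1..d}. x j < ?P v j (a' div 2 ^ j) \<longleftrightarrow> eps j a' = 0"
          using mem_child[OF v(2)] by blast+
        then have "a = a'" by (rule child_index_unique[OF v(3) v'(3)])
        then show False using u(3) v(1) v'(1) True by simp
      qed
    next
      case False
      then have "cell d N v \<inter> cell d N v' = {}" using IH v(2) v'(2) by (auto simp: disjoint_family_on_def)
      then show ?thesis using mem_child[OF v(2)] mem_child[OF v'(2)] v(1) v'(1) by blast
    qed
  qed
qed

lemma cell_volume:
  "1 \<le> d \<Longrightarrow> ((2::nat) ^ d) ^ l \<le> N \<Longrightarrow> u \<in> words d l \<Longrightarrow>
     (\<Prod>j\<in>{1..d}. snd (cell_corners d N u) j - fst (cell_corners d N u) j) = real (Mcount d N u) / real N"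
proof (induction l arbitrary: u)
  case 0
  then have "u = []" "0 < N" by (auto simp: words_def)
  then show ?case using Mcount_eq[OF 0(1), of u 0 N] 0(3) by (simp add: cell_corners_Nil)
next
  case (Suc l)
  obtain v a where v: "u = v @ [a]" "v \<in> words d l" "a < 2 ^ d" using words_SucE[OF Suc.prems(3)] .
  have lv: "length v = l" using v(2) by (simp add: words_def)
  define q where "q = Mquot d N l"
  define r where "r = Mrem d N v"
  have q: "0 < q" unfolding q_def using Suc.prems(2) by (rule Mquot_pos)
  have Mv: "Mcount d N v = 2 ^ d * q + r"
    unfolding q_def r_def using Suc.prems(1) v(2) by (rule Mcount_eq_Mquot_Mrem)
  have Mu: "Mcount d N u = q + (if a < r then 1 else 0)"
    unfolding v q_def r_def using Suc.prems(1) v(2,3) by (rule Mcount_snoc)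
  have "(\<Prod>j\<in>{1..d}. snd (cell_corners d N u) j - fst (cell_corners d N u) j) =
      (\<Prod>j\<in>{1..d}. snd (cell_corners d N v) j - fst (cell_corners d N v) j) *
      (real (group_count q r 0 a) / real (group_count q r d 0))"
    unfolding v cell_corners_snoc lv q_def[symmetric] r_def[symmetric]
    by (rule child_corners_volume[OF q v(3)])
  also have "\<dots> = real (Mcount d N v) / real N * (real (Mcount d N u) / real (Mcount d N v))"
    using Suc.IH[OF Suc.prems(1) pow_le_of_pow_Suc_le[OF Suc.prems(2)] v(2)]
    unfolding group_count_0 group_count_top[OF Mrem_le[of d N v, folded r_def]] Mu Mv by simp
  also have "\<dots> = real (Mcount d N u) / real N"
    using Mv q by (simp del: of_nat_add of_nat_mult)
  finally show ?case .
qed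

lemma Delta_nonneg: "0 \<le> Delta d N l"
  by (simp add: Delta_def)

lemma Ssum_Suc: "Ssum d N (Suc l) = Ssum d N l + Delta d N l"
  by (simp add: Ssum_def)

lemma Delta_eq:
  assumes "2 \<le> d"
  shows "Delta d N l = real ((2 ^ d) ^ (l + 2)) / (8 * 2 ^ l * real N)"
proof -
  define T where "T = (2::real) ^ (2 * d - 3) * 2 ^ (l * (d - 1))"
  have "2 * d - 3 + l * (d - 1) + l + 3 = d * (l + 2)"
    using assms by (cases d) (auto simp: algebra_simps)
  moreover have "T * 2 ^ l * 8 = 2 ^ (2 * d - 3 + l * (d - 1) + l + 3)"
    unfolding T_def by (simp add: power_add)
  moreover have "real ((2 ^ d) ^ (l + 2)) = (2::real) ^ (d * (l + 2))"
    by (simp only: of_nat_power of_nat_numeral power_mult)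
  ultimately have "real ((2 ^ d) ^ (l + 2)) = T * 2 ^ l * 8"
    by (simp only:)
  moreover have "Delta d N l = T / real N"
    unfolding Delta_def T_def by simp
  ultimately show ?thesis by simp
qed

lemma Ssum_le_Delta:
  assumes "2 \<le> d"
  shows "Ssum d N l \<le> Delta d N l"
proof (induction l)
  case (Suc l)
  have "Delta d N (Suc l) = Delta d N l * 2 ^ (d - 1)"
    unfolding Delta_def by (simp add: power_add)
  moreover have "Delta d N l * 2 \<le> Delta d N l * 2 ^ (d - 1)"
    using assms Delta_nonneg[of d N l] by (intro mult_left_mono) (auto simp: self_le_power)
  ultimately show ?case using Suc Ssum_Suc[of d N l] by linarith
qed (simp add: Ssum_def Delta_nonneg)

lemma split_error_le_Delta:
  assumes d: "2 \<le> d" and q: "2 \<le> Mquot d N l" and w: "w \<le> 1 / 2 ^ l + 2 * Delta d N l"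
  shows "w / (4 * real (Mquot d N l)) \<le> Delta d N l"
proof -
  define q where "q = Mquot d N l"
  define B where "B = ((2::nat) ^ d) ^ Suc l"
  have "N = q * B + N mod B" "N mod B < B"
    unfolding q_def B_def Mquot_def by (rule div_mult_mod_eq[symmetric], simp)
  then have "N < (q + 1) * B" by (simp add: algebra_simps)
  then have "real N < real ((q + 1) * B)" by (simp only: of_nat_less_iff)
  then have "8 * real N \<le> 8 * (real q + 1) * real B" by (simp add: algebra_simps)
  also have "\<dots> \<le> (4 * real q - 2) * 2 ^ d * real B"
  proof (rule mult_right_mono)
    have "2 \<le> real q" using q by (simp add: q_def)
    then have "8 * (real q + 1) \<le> (4 * real q - 2) * 4" by simp
    also have "\<dots> \<le> (4 * real q - 2) * 2 ^ d"
      using power_increasing[OF d, of "2::real"] \<open>2 \<le> real q\<close> by (intro mult_left_mono) auto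
    finally show "8 * (real q + 1) \<le> (4 * real q - 2) * 2 ^ d" .
  qed simp
  also have "\<dots> = (4 * real q - 2) * real ((2 ^ d) ^ (l + 2))"
    by (simp add: B_def)
  finally have "8 * real N \<le> (4 * real q - 2) * real ((2 ^ d) ^ (l + 2))" .
  moreover have "0 < N" using q by (cases "N = 0") (auto simp: Mquot_def)
  ultimately have "1 / 2 ^ l \<le> (4 * real q - 2) * Delta d N l"
    unfolding Delta_eq[OF d] by (simp add: field_simps)
  then have "w \<le> 4 * real q * Delta d N l" using w by (simp add: algebra_simps)
  then show ?thesis using q by (simp add: q_def field_simps)
qed

lemma split_point_deviation:
  fixes lo hi A h S D f :: real
  assumes "lo \<le> hi" "\<bar>lo - A\<bar> \<le> S" "\<bar>hi - (A + h)\<bar> \<le> S"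
    and "1 / 2 \<le> f" "(f - 1 / 2) * (hi - lo) \<le> D"
  shows "\<bar>lo + f * (hi - lo) - (A + h / 2)\<bar> \<le> S + D"
proof -
  define E where "E = (f - 1 / 2) * (hi - lo)"
  have "0 \<le> E" "E \<le> D" unfolding E_def using assms(1,4,5) by simp_all
  moreover have mid: "lo + f * (hi - lo) - (A + h / 2) = ((lo - A) + (hi - (A + h))) / 2 + E"
    unfolding E_def by (simp add: field_simps)
  ultimately show ?thesis unfolding mid using assms(2,3) by argo
qed

lemma corner_snoc: "corner (u @ [a]) j = corner u j + real (eps j a) / 2 ^ Suc (length u)"
  by (simp add: corner_def nth_append)

lemma cell_deviation:
  assumes d: "2 \<le> d"
  shows "((2::nat) ^ d) ^ Suc l \<le> N \<Longrightarrow> u \<in> words d l \<Longrightarrow> j \<in> {1..d} \<Longrightarrow>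
     \<bar>fst (cell_corners d N u) j - corner u j\<bar> \<le> Ssum d N l \<and>
     \<bar>snd (cell_corners d N u) j - (corner u j + 1 / 2 ^ l)\<bar> \<le> Ssum d N l"
proof (induction l arbitrary: u)
  case 0
  then show ?case by (simp add: words_0 cell_corners_Nil corner_def Ssum_def)
next
  case (Suc l)
  obtain v a where v: "u = v @ [a]" "v \<in> words d l" "a < 2 ^ d" using words_SucE[OF Suc.prems(2)] .
  have lv: "length v = l" using v(2) by (simp add: words_def)
  have N: "((2::nat) ^ d) ^ Suc l \<le> N" using Suc.prems(1) by (rule pow_le_of_pow_Suc_le)
  define q where "q = Mquot d N l"
  define lo where "lo = fst (cell_corners d N v)"
  define hi where "hi = snd (cell_corners d N v)"
  define f where "f = split_ratio q (Mrem d N v) j (a div 2 ^ j)"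
  define p where "p = split_point q (Mrem d N v) lo hi j (a div 2 ^ j)"
  have q: "2 \<le> q"
    using Mquot_ge[OF Suc.prems(1)] d self_le_power[of "2::nat" d] unfolding q_def by linarith
  have j: "1 \<le> j" using Suc.prems(3) by simp
  have IH: "\<bar>lo j - corner v j\<bar> \<le> Ssum d N l" "\<bar>hi j - (corner v j + 1 / 2 ^ l)\<bar> \<le> Ssum d N l"
    using Suc.IH[OF N v(2) Suc.prems(3)] unfolding lo_def hi_def by auto
  have lo_hi: "lo j \<le> hi j"
    unfolding lo_def hi_def using cell_lo_le_hi[OF pow_le_of_pow_Suc_le[OF N] v(2) Suc.prems(3)] .
  have f: "1 / 2 \<le> f" "f - 1 / 2 \<le> 1 / (4 * real q)"
    unfolding f_def using split_ratio_bounds[of q j] q j by auto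
  have "(f - 1 / 2) * (hi j - lo j) \<le> 1 / (4 * real q) * (hi j - lo j)"
    using f(2) lo_hi by (intro mult_right_mono) auto
  also have "\<dots> = (hi j - lo j) / (4 * real q)" by simp
  also have "\<dots> \<le> Delta d N l"
    using d q IH Ssum_le_Delta[OF d, of N l] unfolding q_def
    by (intro split_error_le_Delta) (auto simp: abs_le_iff)
  finally have "(f - 1 / 2) * (hi j - lo j) \<le> Delta d N l" .
  then have p: "\<bar>p - (corner v j + (1 / 2 ^ l) / 2)\<bar> \<le> Ssum d N l + Delta d N l"
    unfolding p_def split_point_def f_def[symmetric] by (rule split_point_deviation[OF lo_hi IH f(1)])
  have corners: "fst (cell_corners d N u) j = (if eps j a = 0 then lo j else p)"
    "snd (cell_corners d N u) j = (if eps j a = 0 then p else hi j)"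
    unfolding v cell_corners_snoc lv lo_def hi_def p_def q_def by (simp_all add: child_corners_def)
  have corner: "corner u j = corner v j + real (eps j a) * ((1 / 2 ^ l) / 2)"
    unfolding v corner_snoc lv by simp
  have "(1::real) / 2 ^ Suc l = (1 / 2 ^ l) / 2" by simp
  show ?case
  proof (cases "eps j a = 0")
    case True
    then show ?thesis
      unfolding corners corner Ssum_Suc \<open>1 / 2 ^ Suc l = (1 / 2 ^ l) / 2\<close>
      using IH p Delta_nonneg[of d N l] by simp
  next
    case False
    then have "eps j a = 1" using eps_0_or_1[of j a] by simp
    then show ?thesis
      unfolding corners corner Ssum_Suc \<open>1 / 2 ^ Suc l = (1 / 2 ^ l) / 2\<close>
      using IH p Delta_nonneg[of d N l] by (simp add: add.assoc)
  qed
qed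

lemma pow_less_of_less_Lmin: "k < Lmin d N \<Longrightarrow> ((2::nat) ^ d) ^ k < N"
  unfolding Lmin_def by (drule not_less_Least) simp

theorem proposition2p9:
  fixes d N :: nat
  assumes "d \<ge> 2" and "Lmin d N \<ge> 3"
  shows "\<forall>l \<le> Lmin d N - 2. \<exists>lo hi :: nat list \<Rightarrow> nat \<Rightarrow> real.
     (\<forall>u \<in> words d l. (\<forall>j \<in> {1..d}. lo u j \<le> hi u j) \<and> hbox d (lo u) (hi u) \<subseteq> unitQ d)
   \<and> unitQ d - (\<Union>u \<in> words d l. hbox d (lo u) (hi u)) \<in> null_sets (lebd d)
   \<and> (\<forall>u \<in> words d l. \<forall>v \<in> words d l. u \<noteq> v \<longrightarrow>
          hbox d (lo u) (hi u) \<inter> hbox d (lo v) (hi v) \<in> null_sets (lebd d))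
   \<and> (\<forall>u \<in> words d l. measure (lebd d) (hbox d (lo u) (hi u)) = real (Mcount d N u) / real N)
   \<and> (\<forall>u \<in> words d l. \<forall>j \<in> {1..d}.
          \<bar>lo u j - corner u j\<bar> \<le> Ssum d N l \<and>
          \<bar>hi u j - (corner u j + 1 / 2 ^ l)\<bar> \<le> Ssum d N l)"
  apply (intro allI impI)
  subgoal for l
  proof -
    assume "l \<le> Lmin d N - 2"
    then have "Suc l < Lmin d N" using assms(2) by linarith
    then have N: "((2::nat) ^ d) ^ Suc l \<le> N" by (intro less_imp_le pow_less_of_less_Lmin)
    note N' = pow_le_of_pow_Suc_le[OF N]
    have "1 \<le> d" using assms(1) by simp
    have "(\<Union>u\<in>words d l. cell d N u) = unitQ d" by (rule cells_cover[OF N'])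
    moreover have "cell d N u \<inter> cell d N v = {}" if "u \<in> words d l" "v \<in> words d l" "u \<noteq> v" for u v
      using cells_disjoint[OF N'] that by (simp add: disjoint_family_on_def)
    moreover have "measure (lebd d) (cell d N u) = real (Mcount d N u) / real N" if "u \<in> words d l" for u
      using cell_lo_le_hi[OF N' that] cell_volume[OF \<open>1 \<le> d\<close> N' that]
      by (subst measure_lebd_hbox) auto
    ultimately show ?thesis
      using cell_lo_le_hi[OF N'] cell_deviation[OF assms(1) N]
      by (intro exI[of _ "\<lambda>u. fst (cell_corners d N u)"] exI[of _ "\<lambda>u. snd (cell_corners d N u)"]) auto
  qed
  done

end
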